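(* Let $\pi>0$, $\bar d>0$, $0<\theta_1<\dots<\theta_K$, $0\le\beta_1<\dots<\beta_M\le1$, and let $A:[0,D]\to[0,\bar d]$ be continuously differentiable. Enumerate the $KM$ types $(\beta_m,\theta_k)$ as $\Lambda_1,\dots,\Lambda_{KM}$; write $L(Q,\beta,\theta)=\theta[\bar d-\beta A(Q)]-\pi(1-\beta)A(Q)$, $\bar S(Q,\Pi,\Lambda)=L(Q,\Lambda)-\Pi$ and $\sigma(Q,\beta,\theta)=-[\theta\beta+\pi(1-\beta)]A'(Q)$. Let $\Phi=\{(Q_i,\Pi_i)\}_{i=1}^{KM}$ with $Q_i\in[0,D]$ be a feasible contract, i.e. $\bar S(Q_i,\Pi_i,\Lambda_i)\ge0$ for all $i$ and $\bar S(Q_i,\Pi_i,\Lambda_i)\ge\bar S(Q_j,\Pi_j,\Lambda_i)$ for all $i\ne j$. If $\sigma(Q,\Lambda_i)>\sigma(Q,\Lambda_j)$ for all $Q\in[0,D]$, then $Q_i\ge Q_j$.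
   Context: Model: an operator offers one item (data cap $Q_i$, subscription fee $\Pi_i$) for each user type $\Lambda_i=(\beta,\theta)$ (network substitutability $\beta$, data valuation $\theta$). $\pi$ is the overage price, $\bar d$ the mean demand, $A(Q)$ the expected overage consumption under cap $Q$ (decreasing, convex). $L$ is the virtual payoff, $\bar S$ the expected payoff, and $\sigma=\partial L/\partial Q$ is the user's willingness-to-pay (marginal rate of substitution). *)

theory Defs
  imports "HOL-Analysis.Analysis"
begin

text \<open>Virtual payoff L(Q,beta,theta) = theta (dbar - beta A(Q)) - p (1-beta) A(Q),
  where p is the overage price (written pi in the paper). A type is a pair (beta, theta).\<close>
definition virt_payoff :: "real \<Rightarrow> real \<Rightarrow> (real \<Rightarrow> real) \<Rightarrow> real \<Rightarrow> real \<times> real \<Rightarrow> real" where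
  "virt_payoff p dbar A Q lam = snd lam * (dbar - fst lam * A Q) - p * (1 - fst lam) * A Q"

definition exp_payoff :: "real \<Rightarrow> real \<Rightarrow> (real \<Rightarrow> real) \<Rightarrow> real \<Rightarrow> real \<Rightarrow> real \<times> real \<Rightarrow> real" where
  "exp_payoff p dbar A Q fee lam = virt_payoff p dbar A Q lam - fee"

definition wtp :: "real \<Rightarrow> (real \<Rightarrow> real) \<Rightarrow> real \<Rightarrow> real \<times> real \<Rightarrow> real" where
  "wtp p A' Q lam = - (snd lam * fst lam + p * (1 - fst lam)) * A' Q"

end

theory Submission
  imports Defs
begin

text \<open>Both payoffs are affine in the expected overage A(Q) with the same weight
  theta beta + p (1 - beta): the virtual payoff has it as the slope in A(Q), and the
  willingness to pay is its product with -A'(Q). Incentive compatibility between two types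
  forces (weight difference) * (A(Q_j) - A(Q_i)) \<ge> 0, whereas Q_i < Q_j together with a
  sign-definite willingness-to-pay gap makes this product negative by the mean value theorem.
  Only the two incentive constraints between i and j and the differentiability of A are used.\<close>

definition overage_weight :: "real \<Rightarrow> real \<times> real \<Rightarrow> real" where
  "overage_weight p lam = snd lam * fst lam + p * (1 - fst lam)"

lemma virt_payoff_eq_overage_weight:
  "virt_payoff p dbar A Q lam = snd lam * dbar - overage_weight p lam * A Q"
  unfolding virt_payoff_def overage_weight_def by (simp add: algebra_simps)

lemma wtp_eq_overage_weight: "wtp p A' Q lam = - overage_weight p lam * A' Q"
  unfolding wtp_def overage_weight_def by simp

lemma incentive_compatible_pair_nonneg:
  assumes "exp_payoff p dbar A Q1 fee1 lam1 \<ge> exp_payoff p dbar A Q2 fee2 lam1"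
    and "exp_payoff p dbar A Q2 fee2 lam2 \<ge> exp_payoff p dbar A Q1 fee1 lam2"
  shows "(overage_weight p lam1 - overage_weight p lam2) * (A Q2 - A Q1) \<ge> 0"
proof -
  have "overage_weight p lam1 * (A Q2 - A Q1) \<ge> fee1 - fee2"
    "fee1 - fee2 \<ge> overage_weight p lam2 * (A Q2 - A Q1)"
    using assms unfolding exp_payoff_def virt_payoff_eq_overage_weight
    by (simp_all add: algebra_simps)
  then show ?thesis by (simp add: algebra_simps)
qed

lemma has_real_derivative_neg_imp_decreasing_within:
  fixes f f' :: "real \<Rightarrow> real"
  assumes "a < b"
    and deriv: "\<And>x. x \<in> {a..b} \<Longrightarrow> (f has_real_derivative f' x) (at x within {a..b})"
    and neg: "\<And>x. x \<in> {a..b} \<Longrightarrow> f' x < 0"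
  shows "f b < f a"
proof -
  have "\<And>x. \<lbrakk>a \<le> x; x \<le> b\<rbrakk> \<Longrightarrow> (f has_derivative (\<lambda>h. f' x * h)) (at x within {a..b})"
    using deriv by (simp add: has_field_derivative_def)
  then obtain z where z: "z \<in> {a..b}" "f b - f a = f' z * (b - a)"
    using mvt_very_simple[of a b f] \<open>a < b\<close> by force
  have "f' z * (b - a) < 0"
    using \<open>a < b\<close> neg[OF z(1)] by (simp add: mult_neg_pos)
  with z(2) show ?thesis by simp
qed

theorem lemma4:
  fixes p dbar D :: real and K M :: nat
    and theta beta :: "nat \<Rightarrow> real"
    and A A' :: "real \<Rightarrow> real"
    and e :: "nat \<Rightarrow> nat \<times> nat"
    and Q fee :: "nat \<Rightarrow> real"
    and i j :: nat
  assumes p_pos: "p > 0" and dbar_pos: "dbar > 0" and D_pos: "D > 0"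
    and theta_pos: "0 < theta 1" and theta_mono: "strict_mono_on {1..K} theta"
    and beta_nonneg: "0 \<le> beta 1" and beta_le1: "beta M \<le> 1"
    and beta_mono: "strict_mono_on {1..M} beta"
    and A_range: "\<forall>x\<in>{0..D}. 0 \<le> A x \<and> A x \<le> dbar"
    and A_deriv: "\<forall>x\<in>{0..D}. (A has_real_derivative A' x) (at x within {0..D})"
    and A'_cont: "continuous_on {0..D} A'"
    and enum: "bij_betw e {1..K*M} ({1..M} \<times> {1..K})"
    and Q_range: "\<forall>k\<in>{1..K*M}. Q k \<in> {0..D}"
    and IR: "\<forall>k\<in>{1..K*M}.
               exp_payoff p dbar A (Q k) (fee k) (beta (fst (e k)), theta (snd (e k))) \<ge> 0"
    and IC: "\<forall>k\<in>{1..K*M}. \<forall>l\<in>{1..K*M}. k \<noteq> l \<longrightarrow>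
               exp_payoff p dbar A (Q k) (fee k) (beta (fst (e k)), theta (snd (e k)))
               \<ge> exp_payoff p dbar A (Q l) (fee l) (beta (fst (e k)), theta (snd (e k)))"
    and ij: "i \<in> {1..K*M}" "j \<in> {1..K*M}"
    and sigma_gt: "\<forall>q\<in>{0..D}. wtp p A' q (beta (fst (e i)), theta (snd (e i)))
                                  > wtp p A' q (beta (fst (e j)), theta (snd (e j)))"
  shows "Q i \<ge> Q j"
proof (rule ccontr)
  assume "\<not> Q i \<ge> Q j"
  then have lt: "Q i < Q j" by simp
  define c where "c = overage_weight p (beta (fst (e i)), theta (snd (e i)))
                      - overage_weight p (beta (fst (e j)), theta (snd (e j)))"
  have sub: "{Q i..Q j} \<subseteq> {0..D}" using Q_range ij by auto
  have "i \<noteq> j" using lt by auto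
  then have "c * (A (Q j) - A (Q i)) \<ge> 0"
    unfolding c_def using IC[rule_format, OF ij] IC[rule_format, OF ij(2,1)]
    by (intro incentive_compatible_pair_nonneg) auto
  moreover have "c * A (Q j) < c * A (Q i)"
  proof (rule has_real_derivative_neg_imp_decreasing_within[OF lt])
    fix x assume x: "x \<in> {Q i..Q j}"
    with sub A_deriv have "(A has_real_derivative A' x) (at x within {Q i..Q j})"
      by (blast intro: has_field_derivative_subset)
    then show "((\<lambda>q. c * A q) has_real_derivative c * A' x) (at x within {Q i..Q j})"
      by (rule DERIV_cmult)
    show "c * A' x < 0"
      using sigma_gt x sub unfolding c_def wtp_eq_overage_weight by (force simp: algebra_simps)
  qed
  ultimately show False by (simp add: algebra_simps)
qed

end
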